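(* Let $G$ be a countably infinite graph. If $G$ has pairwise disjoint ruling sets $F_n$ ($n\in\mathbb{N}$) satisfying $|F_n|\le\log_2 n$ for all sufficiently large $n$, then $G$ is not Ramsey-dense; that is, there is a 2-coloring of the edges of $K_\mathbb{N}$ in which every monochromatic copy of $G$ has upper density $0$.
   Context: A set $X\subseteq V(G)$ is ruling if $X$ is finite and all but finitely many vertices of $V(G)\setminus X$ have a neighbor in $X$. $K_{\mathbb{N}}$ is the complete graph on $\mathbb{N}$; a copy of $G$ is a subgraph isomorphic to $G$, monochromatic if all its edges have the same color. $\overline{d}(V)=\limsup_{t\to\infty}|V\cap\{1,\dots,t\}|/t$; $G$ is Ramsey-dense if every 2-coloring of $K_\mathbb{N}$ has a monochromatic copy of $G$ with positive upper density. *)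

theory Defs
  imports Complex_Main "HOL-Library.Extended_Real"
begin

definition is_graph :: "('a \<Rightarrow> 'a \<Rightarrow> bool) \<Rightarrow> bool" where
  "is_graph E \<longleftrightarrow> (\<forall>u v. E u v \<longrightarrow> E v u) \<and> (\<forall>v. \<not> E v v)"

definition ruling :: "('a \<Rightarrow> 'a \<Rightarrow> bool) \<Rightarrow> 'a set \<Rightarrow> bool" where
  "ruling E X \<longleftrightarrow> finite X \<and> finite {v. v \<notin> X \<and> \<not> (\<exists>x\<in>X. E v x)}"

definition upper_density :: "nat set \<Rightarrow> ereal" where
  "upper_density V = limsup (\<lambda>t. ereal (real (card (V \<inter> {1..t})) / real t))"

text \<open>A copy of G in K_N: an injective map of the vertices into N (the image of E is
  the edge set of the subgraph isomorphic to G). A 2-colouring of K_N is a map c from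
  2-element sets of naturals to bool; the copy is monochromatic if all its edges get one colour.\<close>
definition mono_copy :: "('a \<Rightarrow> 'a \<Rightarrow> bool) \<Rightarrow> (nat set \<Rightarrow> bool) \<Rightarrow> ('a \<Rightarrow> nat) \<Rightarrow> bool" where
  "mono_copy E c f \<longleftrightarrow> inj f \<and> (\<exists>b. \<forall>u v. E u v \<longrightarrow> c {f u, f v} = b)"

definition ramsey_dense :: "('a \<Rightarrow> 'a \<Rightarrow> bool) \<Rightarrow> bool" where
  "ramsey_dense E \<longleftrightarrow> (\<forall>c :: nat set \<Rightarrow> bool. \<exists>f. mono_copy E c f \<and> upper_density (range f) > 0)"

end

theory Submission
  imports Defs
begin

text \<open>Colour the edge \<open>{x, y}\<close> with \<open>x < y\<close> by the \<open>x\<close>-th binary digit of \<open>y\<close>. In a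
  monochromatic copy \<open>f\<close> of colour \<open>b\<close>, almost every vertex \<open>v\<close> has a neighbour \<open>u\<close> in each
  ruling set \<open>F n\<close> with \<open>f u < f v\<close>, so \<open>f v\<close> has digit \<open>b\<close> at some position of \<open>f ` F n\<close>.
  For finitely many \<open>n\<close> these position sets are disjoint, so this condition is periodic and
  holds with density \<open>\<Prod>(1 - 2 ^ - card (F n)) \<le> \<Prod>(1 - 1 / n)\<close>, which tends to \<open>0\<close>
  because \<open>card (F n) \<le> log 2 n\<close>.\<close>

lemma flip_bit_flip_bit_nat [simp]: "flip_bit s (flip_bit s x) = (x :: nat)"
  by (rule bit_eqI) (auto simp: bit_flip_bit_iff)

lemma flip_bit_less_two_power:
  assumes "(x :: nat) < 2 ^ P" "s < P"
  shows "flip_bit s x < 2 ^ P"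
proof -
  have "take_bit P x = x"
    using assms(1) by (simp add: take_bit_nat_eq_self_iff)
  then have "take_bit P (flip_bit s x) = flip_bit s x"
    using assms(2) by (simp add: take_bit_flip_bit_eq)
  then show ?thesis
    by (metis take_bit_nat_less_exp)
qed

lemma two_mult_card_bit_eq:
  fixes A :: "nat set"
  assumes "finite A" and closed: "\<And>x. x \<in> A \<Longrightarrow> flip_bit s x \<in> A"
  shows "2 * card {x\<in>A. bit x s = c} = card A"
proof -
  let ?A1 = "{x\<in>A. bit x s = c}" and ?A2 = "{x\<in>A. bit x s \<noteq> c}"
  have image: "flip_bit s ` ?A1 = ?A2"
  proof
    show "flip_bit s ` ?A1 \<subseteq> ?A2"
      using closed by (auto simp: bit_flip_bit_iff)
    show "?A2 \<subseteq> flip_bit s ` ?A1"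
    proof
      fix x assume "x \<in> ?A2"
      then have "flip_bit s x \<in> ?A1"
        using closed by (auto simp: bit_flip_bit_iff)
      then show "x \<in> flip_bit s ` ?A1"
        by (metis flip_bit_flip_bit_nat image_eqI)
    qed
  qed
  have "inj_on (flip_bit s) ?A1"
    by (metis flip_bit_flip_bit_nat inj_onI)
  then have "card ?A2 = card ?A1"
    using card_image image by fastforce
  moreover have "card A = card ?A1 + card ?A2"
  proof -
    have "A = ?A1 \<union> ?A2" by auto
    moreover have "card (?A1 \<union> ?A2) = card ?A1 + card ?A2"
      by (rule card_Un_disjoint) (use assms(1) in auto)
    ultimately show ?thesis by simp
  qed
  ultimately show ?thesis
    by simp
qed

lemma two_power_card_mult_card_bits_eq:
  fixes A :: "nat set"
  assumes "finite S" "finite A" "\<And>s x. s \<in> S \<Longrightarrow> x \<in> A \<Longrightarrow> flip_bit s x \<in> A"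
  shows "2 ^ card S * card {x\<in>A. \<forall>s\<in>S. bit x s = c} = card A"
  using assms
proof (induction S rule: finite_induct)
  case empty
  then show ?case by simp
next
  case (insert s S)
  let ?A' = "{x\<in>A. \<forall>s'\<in>S. bit x s' = c}"
  have IH: "2 ^ card S * card ?A' = card A"
    using insert by auto
  have closed: "flip_bit s x \<in> ?A'" if "x \<in> ?A'" for x
    using that insert by (auto simp: bit_flip_bit_iff)
  have half: "2 * card {x\<in>?A'. bit x s = c} = card ?A'"
    by (rule two_mult_card_bit_eq[OF _ closed]) (use insert.prems(1) in simp)
  have "{x\<in>A. \<forall>s'\<in>insert s S. bit x s' = c} = {x\<in>?A'. bit x s = c}"
    by auto
  then have "2 ^ card (insert s S) * card {x\<in>A. \<forall>s'\<in>insert s S. bit x s' = c}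
      = 2 ^ card S * (2 * card {x\<in>?A'. bit x s = c})"
    using insert.hyps by simp
  also have "\<dots> = card A"
    by (simp only: half IH)
  finally show ?case .
qed

definition bits_hitting :: "(nat \<Rightarrow> nat set) \<Rightarrow> nat set \<Rightarrow> bool \<Rightarrow> nat set" where
  "bits_hitting S I b = {x. \<forall>n\<in>I. \<exists>s\<in>S n. bit x s = b}"

lemma bits_hitting_atLeastLessThan_Suc:
  "N0 \<le> n \<Longrightarrow> bits_hitting S {N0..<Suc n} b = bits_hitting S {N0..<n} b - {x. \<forall>s\<in>S n. bit x s = (\<not> b)}"
  unfolding bits_hitting_def by (auto simp: less_Suc_eq)

lemma flip_bit_mem_bits_hitting:
  assumes "x \<in> bits_hitting S I b" "s \<in> S n" "\<And>m. m \<in> I \<Longrightarrow> S m \<inter> S n = {}"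
  shows "flip_bit s x \<in> bits_hitting S I b"
  using assms unfolding bits_hitting_def by (auto simp: bit_flip_bit_iff) (metis disjoint_iff)

lemma mod_two_power_mem_bits_hitting:
  assumes "x \<in> bits_hitting S I b" "\<And>n s. n \<in> I \<Longrightarrow> s \<in> S n \<Longrightarrow> s < P"
  shows "x mod 2 ^ P \<in> bits_hitting S I b"
  using assms unfolding bits_hitting_def by (fastforce simp: bit_take_bit_iff simp flip: take_bit_eq_mod)

lemma card_bits_hitting_Suc_le:
  fixes S :: "nat \<Rightarrow> nat set"
  assumes "N0 \<le> n" "finite (S n)" "\<And>s. s \<in> S n \<Longrightarrow> s < P" "2 ^ card (S n) \<le> n"
    and disjoint: "\<And>m. N0 \<le> m \<Longrightarrow> m < n \<Longrightarrow> S m \<inter> S n = {}"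
  shows "real (card (bits_hitting S {N0..<Suc n} b \<inter> {..<2^P})) * real n
    \<le> real (card (bits_hitting S {N0..<n} b \<inter> {..<2^P})) * (real n - 1)"
proof -
  define A where "A = bits_hitting S {N0..<n} b \<inter> {..<2^P}"
  define D where "D = {x\<in>A. \<forall>s\<in>S n. bit x s = (\<not> b)}"
  have "finite A"
    unfolding A_def by simp
  have "flip_bit s x \<in> A" if "s \<in> S n" "x \<in> A" for s x
  proof -
    have "flip_bit s x \<in> bits_hitting S {N0..<n} b"
      using that disjoint unfolding A_def by (intro flip_bit_mem_bits_hitting) auto
    moreover have "flip_bit s x < 2 ^ P"
      using that assms(3) unfolding A_def by (intro flip_bit_less_two_power) auto
    ultimately show ?thesis
      unfolding A_def by simp
  qed
  then have "2 ^ card (S n) * card D = card A"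
    unfolding D_def using \<open>finite A\<close> assms(2) by (intro two_power_card_mult_card_bits_eq)
  then have card_A: "real (card A) \<le> real n * real (card D)"
    using assms(4) by (metis mult_le_mono1 of_nat_le_iff of_nat_mult)
  have "D \<subseteq> A"
    unfolding D_def by auto
  then have card_A_D: "real (card (A - D)) = real (card A) - real (card D)"
    using \<open>finite A\<close> by (metis card_Diff_subset card_mono finite_subset of_nat_diff)
  have "bits_hitting S {N0..<Suc n} b \<inter> {..<2^P} = A - D"
    unfolding A_def D_def using assms(1) by (auto simp: bits_hitting_atLeastLessThan_Suc)
  then show ?thesis
    using card_A by (simp add: card_A_D flip: A_def) (simp add: algebra_simps)
qed

lemma card_bits_hitting_le:
  fixes S :: "nat \<Rightarrow> nat set"
  assumes "N0 \<le> M"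
    and finite: "\<And>n. finite (S n)"
    and bounded: "\<And>n s. N0 \<le> n \<Longrightarrow> n < M \<Longrightarrow> s \<in> S n \<Longrightarrow> s < P"
    and card: "\<And>n. N0 \<le> n \<Longrightarrow> 2 ^ card (S n) \<le> n"
    and disjoint: "\<And>m n. m \<noteq> n \<Longrightarrow> S m \<inter> S n = {}"
  shows "real (card (bits_hitting S {N0..<M} b \<inter> {..<2^P})) * (real M - 1) \<le> 2 ^ P * (real N0 - 1)"
  \<comment> \<open>the telescoping product \<open>\<Prod>n=N0..<M. 1 - 1 / n = (N0 - 1) / (M - 1)\<close>\<close>
  using assms(1) bounded
proof (induction M rule: dec_induct)
  case base
  have "bits_hitting S {N0..<N0} b = UNIV"
    unfolding bits_hitting_def by simp
  then show ?case
    by simp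
next
  case (step n)
  have "real (card (bits_hitting S {N0..<Suc n} b \<inter> {..<2^P})) * (real (Suc n) - 1)
      \<le> real (card (bits_hitting S {N0..<n} b \<inter> {..<2^P})) * (real n - 1)"
    using step.hyps step.prems finite card disjoint by (simp add: card_bits_hitting_Suc_le)
  also have "\<dots> \<le> 2 ^ P * (real N0 - 1)"
    using step.IH step.prems by simp
  finally show ?case .
qed

lemma card_periodic_le:
  fixes T :: "nat set"
  assumes "0 < m" "\<And>x. x \<in> T \<Longrightarrow> x mod m \<in> T"
  shows "card (T \<inter> {..<t}) \<le> (t div m + 1) * card (T \<inter> {..<m})"
proof -
  let ?g = "\<lambda>x. (x div m, x mod m)"
  have "inj_on ?g (T \<inter> {..<t})"
    by (rule inj_onI) (metis div_mult_mod_eq prod.inject)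
  moreover have "?g ` (T \<inter> {..<t}) \<subseteq> {..t div m} \<times> (T \<inter> {..<m})"
    using assms by (auto intro: div_le_mono)
  ultimately have "card (T \<inter> {..<t}) \<le> card ({..t div m} \<times> (T \<inter> {..<m}))"
    by (intro card_inj_on_le) auto
  then show ?thesis
    by (simp add: card_cartesian_product)
qed

lemma eventually_card_le_of_periodic_cover:
  assumes "finite B" "V \<subseteq> B \<union> T" "0 < m" "\<And>x. x \<in> T \<Longrightarrow> x mod m \<in> T"
    and density: "real (card (T \<inter> {..<m})) \<le> \<delta> * real m" and "\<delta> < \<epsilon>"
  shows "\<forall>\<^sub>F t in sequentially. real (card (V \<inter> {1..t})) \<le> \<epsilon> * real t"
proof -
  define K where "K = card (T \<inter> {..<m})"
  have "0 \<le> \<delta> * real m"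
    using density by (meson of_nat_0_le_iff order_trans)
  then have "0 \<le> \<delta>"
    using \<open>0 < m\<close> by (simp add: zero_le_mult_iff)
  have bound: "real (card (V \<inter> {1..t})) \<le> real (card B) + real K + \<delta> * (real t + 1)" for t
  proof -
    have "V \<inter> {1..t} \<subseteq> B \<union> (T \<inter> {..<Suc t})"
      using assms(2) by auto
    then have "card (V \<inter> {1..t}) \<le> card B + card (T \<inter> {..<Suc t})"
      using assms(1) by (meson card_Un_le card_mono finite_Int finite_Un finite_lessThan order_trans)
    also have "card (T \<inter> {..<Suc t}) \<le> (Suc t div m + 1) * K"
      unfolding K_def using assms(3,4) by (rule card_periodic_le)
    finally have card_V: "real (card (V \<inter> {1..t})) \<le> real (card B) + real K + real (Suc t div m) * real K"
      by (simp add: algebra_simps flip: of_nat_mult of_nat_add)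
    have "Suc t div m * m \<le> Suc t"
      by (rule div_times_less_eq_dividend)
    then have div_bound: "real (Suc t div m) * real m \<le> real t + 1"
      by (metis add.commute of_nat_Suc of_nat_le_iff of_nat_mult)
    have "real (Suc t div m) * real K \<le> real (Suc t div m) * (\<delta> * real m)"
      using density unfolding K_def by (simp add: mult_left_mono)
    also have "\<dots> \<le> \<delta> * (real t + 1)"
      using div_bound \<open>0 \<le> \<delta>\<close>
      by (simp add: mult_left_mono mult.left_commute)
    finally show ?thesis
      using card_V by linarith
  qed
  have "\<forall>\<^sub>F t in sequentially. (real (card B) + real K + \<delta>) / (\<epsilon> - \<delta>) \<le> real t"
    using filterlim_real_sequentially by (simp add: filterlim_at_top)
  then have "\<forall>\<^sub>F t in sequentially. real (card B) + real K + \<delta> * (real t + 1) \<le> \<epsilon> * real t"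
    by eventually_elim (use \<open>\<delta> < \<epsilon>\<close> in \<open>simp add: field_simps\<close>)
  then show ?thesis
    by eventually_elim (use bound in \<open>rule order_trans\<close>)
qed

lemma upper_density_eq_0I:
  assumes "\<And>\<epsilon>. 0 < \<epsilon> \<Longrightarrow> \<forall>\<^sub>F t in sequentially. real (card (V \<inter> {1..t})) \<le> \<epsilon> * real t"
  shows "upper_density V = 0"
proof -
  have "(\<lambda>t. real (card (V \<inter> {1..t})) / real t) \<longlonglongrightarrow> 0"
  proof (rule order_tendstoI)
    fix a :: real assume "0 < a"
    have "\<forall>\<^sub>F t in sequentially. real (card (V \<inter> {1..t})) \<le> a / 2 * real t \<and> 0 < t"
      using assms[of "a / 2"] \<open>0 < a\<close> by (simp add: eventually_conj eventually_gt_at_top)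
    then show "\<forall>\<^sub>F t in sequentially. real (card (V \<inter> {1..t})) / real t < a"
    proof eventually_elim
      case (elim t)
      then have "0 < a * real t"
        using \<open>0 < a\<close> by simp
      with elim show ?case
        by (simp add: divide_less_eq)
    qed
  next
    fix a :: real assume "a < 0"
    then show "\<forall>\<^sub>F t in sequentially. a < real (card (V \<inter> {1..t})) / real t"
      by (intro always_eventually allI) (smt (verit) divide_nonneg_nonneg of_nat_0_le_iff)
  qed
  then have "limsup (\<lambda>t. ereal (real (card (V \<inter> {1..t})) / real t)) = ereal 0"
    by (intro lim_imp_Limsup tendsto_ereal) simp_all
  then show ?thesis
    by (simp add: upper_density_def zero_ereal_def)
qed

lemma upper_density_eq_0_if_periodic_covers:
  assumes "\<And>\<delta>. 0 < \<delta> \<Longrightarrow> \<exists>B T m. finite B \<and> V \<subseteq> B \<union> T \<and> 0 < m \<and> (\<forall>x\<in>T. x mod m \<in> T)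
    \<and> real (card (T \<inter> {..<m})) \<le> \<delta> * real m"
  shows "upper_density V = 0"
proof (rule upper_density_eq_0I)
  fix \<epsilon> :: real assume "0 < \<epsilon>"
  then obtain B T m where "finite B" "V \<subseteq> B \<union> T" "0 < m" "\<forall>x\<in>T. x mod m \<in> T"
    "real (card (T \<inter> {..<m})) \<le> \<epsilon> / 2 * real m"
    using assms[of "\<epsilon> / 2"] by auto
  then show "\<forall>\<^sub>F t in sequentially. real (card (V \<inter> {1..t})) \<le> \<epsilon> * real t"
    using \<open>0 < \<epsilon>\<close> by (intro eventually_card_le_of_periodic_cover[where \<delta> = "\<epsilon> / 2"]) auto
qed

definition bit_colouring :: "nat set \<Rightarrow> bool" where
  "bit_colouring e = bit (Max e) (Min e)"

lemma range_subset_bits_hitting: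
  fixes f :: "'a \<Rightarrow> nat"
  assumes mono: "\<And>u v. E u v \<Longrightarrow> bit_colouring {f u, f v} = b"
    and below: "\<And>n u. n \<in> I \<Longrightarrow> u \<in> F n \<Longrightarrow> f u < P"
  shows "range f \<subseteq> {..<P} \<union> f ` (\<Union>n\<in>I. {v. v \<notin> F n \<and> \<not> (\<exists>u\<in>F n. E v u)})
    \<union> bits_hitting (\<lambda>n. f ` F n) I b"
proof (rule image_subsetI)
  fix v
  show "f v \<in> {..<P} \<union> f ` (\<Union>n\<in>I. {v. v \<notin> F n \<and> \<not> (\<exists>u\<in>F n. E v u)})
    \<union> bits_hitting (\<lambda>n. f ` F n) I b"
  proof (cases "P \<le> f v \<and> (\<forall>n\<in>I. \<exists>u\<in>F n. E v u)")
    case True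
    have "\<exists>s\<in>f ` F n. bit (f v) s = b" if n: "n \<in> I" for n
    proof -
      obtain u where "u \<in> F n" "E v u"
        using True n by blast
      moreover from this have "f u < f v"
        using below n True by fastforce
      ultimately show ?thesis
        using mono[of v u] by (auto simp: bit_colouring_def max_def min_def)
    qed
    then show ?thesis
      unfolding bits_hitting_def by blast
  next
    case False
    then show ?thesis
      using below by fastforce
  qed
qed

lemma mono_copy_bit_colouring_periodic_cover:
  fixes E :: "'a \<Rightarrow> 'a \<Rightarrow> bool" and \<delta> :: real
  assumes ruling: "\<And>n. ruling E (F n)"
    and disjoint: "\<And>m n. m \<noteq> n \<Longrightarrow> F m \<inter> F n = {}"
    and small: "\<forall>\<^sub>F n in sequentially. 2 ^ card (F n) \<le> n"
    and copy: "mono_copy E bit_colouring f" and "0 < \<delta>"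
  shows "\<exists>B T m. finite B \<and> range f \<subseteq> B \<union> T \<and> 0 < m \<and> (\<forall>x\<in>T. x mod m \<in> T)
    \<and> real (card (T \<inter> {..<m})) \<le> \<delta> * real m"
proof -
  obtain b where "inj f" and mono: "\<And>u v. E u v \<Longrightarrow> bit_colouring {f u, f v} = b"
    using copy unfolding mono_copy_def by blast
  obtain N0 where card_F: "\<And>n. N0 \<le> n \<Longrightarrow> 2 ^ card (F n) \<le> n"
    using small unfolding eventually_sequentially by blast
  obtain M :: nat where M: "real N0 + real N0 / \<delta> + 1 < real M"
    using reals_Archimedean2 by blast
  have "0 \<le> real N0 / \<delta>"
    using \<open>0 < \<delta>\<close> by simp
  then have "N0 < M" and "1 < real M" and "real N0 / \<delta> < real M - 1"
    using M by linarith+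
  then have ratio: "real N0 - 1 \<le> \<delta> * (real M - 1)"
    using \<open>0 < \<delta>\<close> by (simp add: field_simps)
  define S where "S n = f ` F n" for n
  define I where "I = {N0..<M}"
  have finite_F: "finite (F n)" for n
    using ruling unfolding ruling_def by blast
  then have "finite (f ` (\<Union>n\<in>I. F n))"
    unfolding I_def by simp
  then obtain P where P: "\<And>n u. n \<in> I \<Longrightarrow> u \<in> F n \<Longrightarrow> f u < P"
    unfolding finite_nat_set_iff_bounded by blast
  define T where "T = bits_hitting S I b"
  have "real (card (T \<inter> {..<2^P})) * (real M - 1) \<le> 2 ^ P * (real N0 - 1)"
    unfolding T_def I_def
  proof (rule card_bits_hitting_le)
    show "finite (S n)" for n
      unfolding S_def using finite_F by simp
    show "s < P" if "N0 \<le> n" "n < M" "s \<in> S n" for n s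
      using that P unfolding S_def I_def by auto
    show "2 ^ card (S n) \<le> n" if "N0 \<le> n" for n
      unfolding S_def using card_F[OF that] \<open>inj f\<close> by (simp add: card_image inj_on_subset)
    show "S m \<inter> S n = {}" if "m \<noteq> n" for m n
      unfolding S_def using disjoint[OF that] \<open>inj f\<close> by (simp flip: image_Int)
  qed (use \<open>N0 < M\<close> in auto)
  also have "\<dots> \<le> \<delta> * real ((2::nat) ^ P) * (real M - 1)"
    using ratio by simp
  finally have density: "real (card (T \<inter> {..<2^P})) \<le> \<delta> * real ((2::nat) ^ P)"
    using \<open>1 < real M\<close> by (simp add: mult_le_cancel_right_pos)
  define B where "B = {..<P} \<union> f ` (\<Union>n\<in>I. {v. v \<notin> F n \<and> \<not> (\<exists>u\<in>F n. E v u)})"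
  have "\<forall>x\<in>T. x mod 2 ^ P \<in> T"
    unfolding T_def S_def using P by (blast intro: mod_two_power_mem_bits_hitting)
  moreover have "range f \<subseteq> B \<union> T"
    unfolding B_def T_def S_def using mono P by (rule range_subset_bits_hitting)
  moreover have "finite B"
    using ruling unfolding ruling_def B_def I_def by simp
  ultimately show ?thesis
    using density by (intro exI[of _ B] exI[of _ T] exI[of _ "2 ^ P"]) simp
qed

theorem mainTheorem9:
  fixes E :: "'a \<Rightarrow> 'a \<Rightarrow> bool" and F :: "nat \<Rightarrow> 'a set"
  assumes "countable (UNIV :: 'a set)" and "infinite (UNIV :: 'a set)"
    and "is_graph E"
    and "\<And>n. ruling E (F n)"
    and "\<And>m n. m \<noteq> n \<Longrightarrow> F m \<inter> F n = {}"
    and "\<forall>\<^sub>F n in sequentially. real (card (F n)) \<le> log 2 (real n)"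
  shows "\<not> ramsey_dense E \<and>
    (\<exists>c :: nat set \<Rightarrow> bool. \<forall>f. mono_copy E c f \<longrightarrow> upper_density (range f) = 0)"
proof -
  have "\<forall>\<^sub>F n in sequentially. 2 ^ card (F n) \<le> n"
    using assms(6) eventually_gt_at_top[of 0]
  proof eventually_elim
    case (elim n)
    then have "2 powr real (card (F n)) \<le> real n"
      by (simp add: le_log_iff)
    then show ?case
      by (simp add: powr_realpow flip: of_nat_le_iff)
  qed
  then have "upper_density (range f) = 0" if "mono_copy E bit_colouring f" for f
    using mono_copy_bit_colouring_periodic_cover[OF assms(4,5) _ that]
    by (intro upper_density_eq_0_if_periodic_covers) simp
  then show ?thesis
    unfolding ramsey_dense_def by force
qed

end
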